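(* $q_0$ satisfies $L_0^2\big(\xi'(q_0)+h^2\big)=q_0$.
   Context: Let $(\gamma_p)_{p\ge2}$ be real with $\sum_{p\ge2}2^p\gamma_p^2<\infty$ and $\gamma_p=0$ for all odd $p$, $h\in\mathbb R$, $\xi(s)=\sum_{p\ge2}\gamma_p^2s^p$. $\mathcal N$ is the set of nonnegative nondecreasing right-continuous functions on $[0,1)$, $\mathcal K=\{(L,\alpha)\in(0,\infty)\times\mathcal N:L>\int_0^1\alpha\}$, $\mathcal Q(L,\alpha)=\frac12\big((\xi'(1)+h^2)L-\int_0^1\xi''(q)(\int_0^q\alpha(s)ds)dq+\int_0^1\frac{dq}{L-\int_0^q\alpha(s)ds}\big)$, and $(L_0,\alpha_0)$ is the (known, unique) minimizer of $\mathcal Q$ on $\mathcal K$. Set $q_0=\inf\{s\in[0,1):\alpha_0(s)>0\}$ if this set is nonempty and $q_0=1$ otherwise. *)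

theory Defs
  imports "HOL-Analysis.Analysis"
begin

definition xi :: "(nat \<Rightarrow> real) \<Rightarrow> real \<Rightarrow> real" where
  "xi \<gamma> s = (\<Sum>p. if 2 \<le> p then (\<gamma> p)\<^sup>2 * s ^ p else 0)"

definition classN :: "(real \<Rightarrow> real) set" where
  "classN = {\<alpha>. (\<forall>s\<in>{0..<1}. 0 \<le> \<alpha> s) \<and> mono_on {0..<1} \<alpha> \<and>
                 (\<forall>s\<in>{0..<1}. continuous (at_right s) \<alpha>)}"

definition classK :: "(real \<times> (real \<Rightarrow> real)) set" where
  "classK = {(L, \<alpha>). 0 < L \<and> \<alpha> \<in> classN \<and> \<alpha> integrable_on {0..1} \<and>
                       L > integral {0..1} \<alpha>}"

definition Qfun :: "(nat \<Rightarrow> real) \<Rightarrow> real \<Rightarrow> real \<Rightarrow> (real \<Rightarrow> real) \<Rightarrow> real" where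
  "Qfun \<gamma> h L \<alpha> = (1/2) * ((deriv (xi \<gamma>) 1 + h\<^sup>2) * L
      - integral {0..1} (\<lambda>q. deriv (deriv (xi \<gamma>)) q * integral {0..q} \<alpha>)
      + integral {0..1} (\<lambda>q. 1 / (L - integral {0..q} \<alpha>)))"

definition q0_of :: "(real \<Rightarrow> real) \<Rightarrow> real" where
  "q0_of \<alpha> = (if {s\<in>{0..<1}. \<alpha> s > 0} \<noteq> {} then Inf {s\<in>{0..<1}. \<alpha> s > 0} else 1)"

end

theory Submission
  imports Defs
begin

text \<open>Write \<open>A(q) = \<integral>\<^sub>0\<^sup>q \<alpha>\<^sub>0\<close>. Along any curve \<open>t \<mapsto> (L\<^sub>0 + t l, \<alpha>\<^sub>t)\<close> in \<open>K\<close> with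
  \<open>\<integral>\<^sub>0\<^sup>q \<alpha>\<^sub>t = A(q) + t B(q)\<close> the minimiser satisfies the first-order condition
  \<open>(\<xi>'(1) + h\<^sup>2) l - \<integral> \<xi>'' B - \<integral> (l - B) / (L\<^sub>0 - A)\<^sup>2 \<ge> 0\<close>.
  Varying \<open>L\<close> alone gives \<open>\<integral>\<^sub>0\<^sup>1 (L\<^sub>0 - A)\<^sup>-\<^sup>2 = \<xi>'(1) + h\<^sup>2\<close>, and since \<open>A\<close> vanishes on
  \<open>[0, q\<^sub>0]\<close>, the tail \<open>H(x) = \<integral>\<^sub>x\<^sup>1 ((L\<^sub>0 - A)\<^sup>-\<^sup>2 - \<xi>'')\<close> satisfies
  \<open>H(q\<^sub>0) = \<xi>'(q\<^sub>0) + h\<^sup>2 - q\<^sub>0 / L\<^sub>0\<^sup>2\<close>. Shrinking \<open>\<alpha>\<^sub>0\<close> on \<open>[0, r)\<close> shows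
  \<open>H(r) \<le> O(r - q\<^sub>0)\<close>, and flattening \<open>\<alpha>\<^sub>0\<close> to the constant \<open>\<alpha>\<^sub>0(r)\<close> on \<open>[q\<^sub>0 - 3\<epsilon>, r)\<close>,
  \<open>r = q\<^sub>0 + \<epsilon>\<close>, shows \<open>H(r) \<ge> -O(\<epsilon>)\<close>. Letting \<open>r \<down> q\<^sub>0\<close> gives \<open>H(q\<^sub>0) = 0\<close>.\<close>

lemma xi_power_series: "xi \<gamma> s = (\<Sum>p. (if 2 \<le> p then (\<gamma> p)\<^sup>2 else 0) * s ^ p)"
  unfolding xi_def by (rule arg_cong[where f=suminf]) auto

lemma xi_derivatives:
  assumes "summable (\<lambda>p. 2 ^ p * (\<gamma> p)\<^sup>2)"
  obtains g1 g2 :: "real \<Rightarrow> real" where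
    "\<And>z. \<bar>z\<bar> < 2 \<Longrightarrow> (xi \<gamma> has_real_derivative g1 z) (at z)"
    "\<And>z. \<bar>z\<bar> < 2 \<Longrightarrow> (g1 has_real_derivative g2 z) (at z)"
    "\<And>z. \<bar>z\<bar> < 2 \<Longrightarrow> isCont g2 z"
    "g1 0 = 0"
proof -
  define c where "c p = (if 2 \<le> p then (\<gamma> p)\<^sup>2 else 0)" for p
  have "summable (\<lambda>n. c n * 2 ^ n)"
    by (rule summable_comparison_test[OF _ assms]) (auto simp: c_def intro!: exI[of _ 0])
  then have s0: "summable (\<lambda>n. c n * z ^ n)" if "norm z < 2" for z :: real
    by (rule powser_inside) (use that in auto)
  have s1: "summable (\<lambda>n. diffs c n * z ^ n)" if "norm z < 2" for z :: real
    by (rule termdiff_converges[OF that s0])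
  have s2: "summable (\<lambda>n. diffs (diffs c) n * z ^ n)" if "norm z < 2" for z :: real
    by (rule termdiff_converges[OF that s1])
  define g1 where "g1 z = (\<Sum>n. diffs c n * z ^ n)" for z :: real
  define g2 where "g2 z = (\<Sum>n. diffs (diffs c) n * z ^ n)" for z :: real
  define g3 where "g3 z = (\<Sum>n. diffs (diffs (diffs c)) n * z ^ n)" for z :: real
  show ?thesis
  proof
    show "(xi \<gamma> has_real_derivative g1 z) (at z)" if "\<bar>z\<bar> < 2" for z
      unfolding g1_def xi_power_series[abs_def] c_def[symmetric]
      by (rule termdiffs_strong'[of 2]) (use s0 that in auto)
    show "(g1 has_real_derivative g2 z) (at z)" if "\<bar>z\<bar> < 2" for z
      unfolding g1_def g2_def by (rule termdiffs_strong'[of 2]) (use s1 that in auto)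
    have "(g2 has_real_derivative g3 z) (at z)" if "\<bar>z\<bar> < 2" for z
      unfolding g3_def g2_def by (rule termdiffs_strong'[of 2]) (use s2 that in auto)
    then show "isCont g2 z" if "\<bar>z\<bar> < 2" for z
      using DERIV_isCont that by blast
    show "g1 0 = 0"
      unfolding g1_def by (simp add: diffs_def c_def)
  qed
qed

lemma
  assumes "summable (\<lambda>p. 2 ^ p * (\<gamma> p)\<^sup>2)"
  shows has_real_derivative_deriv_xi:
      "\<bar>z\<bar> < 2 \<Longrightarrow> (deriv (xi \<gamma>) has_real_derivative deriv (deriv (xi \<gamma>)) z) (at z)"
    and continuous_on_deriv2_xi: "continuous_on {-2<..<2} (deriv (deriv (xi \<gamma>)))"
    and deriv_xi_0: "deriv (xi \<gamma>) 0 = 0"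
proof -
  obtain g1 g2 where d0: "\<And>z. \<bar>z\<bar> < 2 \<Longrightarrow> (xi \<gamma> has_real_derivative g1 z) (at z)"
    and d1: "\<And>z. \<bar>z\<bar> < 2 \<Longrightarrow> (g1 has_real_derivative g2 z) (at z)"
    and c2: "\<And>z. \<bar>z\<bar> < 2 \<Longrightarrow> isCont g2 z" and g10: "g1 0 = 0"
    using xi_derivatives[OF assms] by blast
  have e1: "deriv (xi \<gamma>) z = g1 z" if "\<bar>z\<bar> < 2" for z
    using d0[OF that] by (rule DERIV_imp_deriv)
  have d1': "(deriv (xi \<gamma>) has_real_derivative g2 z) (at z)" if "\<bar>z\<bar> < 2" for z
    by (rule has_field_derivative_transform_within_open[OF d1[OF that], of "{-2<..<2}"])
      (use that e1 in auto)
  have e2: "deriv (deriv (xi \<gamma>)) z = g2 z" if "\<bar>z\<bar> < 2" for z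
    using d1'[OF that] by (rule DERIV_imp_deriv)
  show "\<bar>z\<bar> < 2 \<Longrightarrow> (deriv (xi \<gamma>) has_real_derivative deriv (deriv (xi \<gamma>)) z) (at z)"
    using d1' e2 by simp
  have "continuous_on {-2<..<2} g2"
    using c2 by (intro continuous_at_imp_continuous_on) auto
  then show "continuous_on {-2<..<2} (deriv (deriv (xi \<gamma>)))"
    by (rule continuous_on_eq) (auto simp: e2)
  show "deriv (xi \<gamma>) 0 = 0"
    using e1[of 0] g10 by simp
qed

lemma inverse_add_le_quadratic:
  fixes y e m :: real
  assumes "m > 0" "m \<le> y" "m/2 \<le> y + e"
  shows "1/(y+e) - 1/y \<le> - e / y^2 + 2 * e^2 / m^3"
proof -
  have y: "y > 0" "y + e > 0" using assms by auto
  have id: "1/(y+e) - 1/y + e/y^2 = e^2/(y^2*(y+e))"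
    using y by (simp add: divide_simps power2_eq_square) (simp add: algebra_simps)
  have "m^2 \<le> y^2" using assms by (intro power_mono) auto
  then have "m^2 * (m/2) \<le> y^2 * (y+e)" using assms by (intro mult_mono) auto
  then have "e^2/(y^2*(y+e)) \<le> e^2/(m^2 * (m/2))"
    using assms by (intro divide_left_mono) auto
  also have "\<dots> = 2*e^2/m^3" by (simp add: power3_eq_cube power2_eq_square)
  finally show ?thesis using id by linarith
qed

lemma integral_inverse_add_le:
  fixes y D :: "real \<Rightarrow> real" and d m :: real
  assumes cy: "continuous_on {0..1} y" and cD: "continuous_on {0..1} D"
    and ym: "\<And>q. q \<in> {0..1} \<Longrightarrow> m \<le> y q" and m: "m > 0"
    and Dd: "\<And>q. q \<in> {0..1} \<Longrightarrow> \<bar>D q\<bar> \<le> d" and d: "d \<le> m/2"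
  shows "integral {0..1} (\<lambda>q. 1/(y q + D q)) - integral {0..1} (\<lambda>q. 1/(y q))
           \<le> - integral {0..1} (\<lambda>q. D q / (y q)^2) + 2 * d^2 / m^3"
proof -
  have yD: "m/2 \<le> y q + D q" if "q \<in> {0..1}" for q
    using ym[OF that] Dd[OF that] d by linarith
  have nz: "y q \<noteq> 0" "y q + D q \<noteq> 0" if "q \<in> {0..1}" for q
    using ym[OF that] yD[OF that] m by auto
  have pw: "1/(y q + D q) - 1/(y q) \<le> - (D q / (y q)^2) + 2 * d^2 / m^3"
    if q: "q \<in> {0..1}" for q
  proof -
    have "(D q)^2 \<le> d^2" using Dd[OF q] abs_le_square_iff by fastforce
    then have "2 * (D q)^2 / m^3 \<le> 2 * d^2 / m^3" using m by (simp add: divide_right_mono)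
    then show ?thesis using inverse_add_le_quadratic[OF m ym[OF q] yD[OF q]] by simp
  qed
  have "integral {0..1} (\<lambda>q. 1/(y q + D q)) - integral {0..1} (\<lambda>q. 1/(y q))
      = integral {0..1} (\<lambda>q. 1/(y q + D q) - 1/(y q))"
    using cy cD nz
    by (intro integral_diff[symmetric] integrable_continuous_interval continuous_intros) auto
  also have "\<dots> \<le> integral {0..1} (\<lambda>q. - (D q / (y q)^2) + 2 * d^2 / m^3)"
    using cy cD nz
    by (intro integral_le pw integrable_continuous_interval continuous_intros) auto
  also have "\<dots> = - integral {0..1} (\<lambda>q. D q / (y q)^2) + 2 * d^2 / m^3"
    using cy cD nz
    by (subst integral_add) (auto intro!: integrable_continuous_interval continuous_intros)
  finally show ?thesis .
qed

lemma first_variation_inverse_nonneg: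
  fixes y D :: "real \<Rightarrow> real" and c m :: real
  assumes cy: "continuous_on {0..1} y" and cD: "continuous_on {0..1} D"
    and ym: "\<And>q. q \<in> {0..1} \<Longrightarrow> m \<le> y q" and m: "m > 0"
    and var: "\<forall>\<^sub>F t in at_right 0.
                0 \<le> t * c + integral {0..1} (\<lambda>q. 1/(y q + t * D q)) - integral {0..1} (\<lambda>q. 1/(y q))"
  shows "0 \<le> c - integral {0..1} (\<lambda>q. D q / (y q)^2)"
proof -
  define I where "I = integral {0..1} (\<lambda>q. D q / (y q)^2)"
  obtain MD where MD: "\<And>q. q \<in> {0..1} \<Longrightarrow> \<bar>D q\<bar> \<le> MD"
    using continuous_on_compact_bound[OF compact_Icc cD] by auto
  define C where "C = 2 * MD^2 / m^3"
  have small: "\<forall>\<^sub>F t in at_right 0. t * MD < m/2"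
  proof (rule order_tendstoD(2))
    show "((\<lambda>t. t * MD) \<longlongrightarrow> 0) (at_right 0)"
      by (rule tendsto_eq_intros | simp)+
  qed (use m in auto)
  have "\<forall>\<^sub>F t in at_right 0. 0 \<le> c - I + t * C"
    using var small eventually_at_right_less
  proof eventually_elim
    case (elim t)
    have "integral {0..1} (\<lambda>q. 1/(y q + t * D q)) - integral {0..1} (\<lambda>q. 1/(y q))
        \<le> - integral {0..1} (\<lambda>q. t * D q / (y q)^2) + 2 * (t * MD)^2 / m^3"
      using elim MD
      by (intro integral_inverse_add_le[OF cy _ ym m]) (auto intro: continuous_intros cD simp: abs_mult mult_left_mono)
    also have "\<dots> = - t * I + t^2 * C"
      by (simp add: I_def C_def power_mult_distrib flip: integral_mult_right times_divide_eq_right)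
    finally have "0 \<le> t * (c - I + t * C)"
      using elim by (simp add: algebra_simps power2_eq_square)
    then show ?case using elim by (simp add: zero_le_mult_iff)
  qed
  moreover have "((\<lambda>t. c - I + t * C) \<longlongrightarrow> c - I) (at_right 0)"
    by (rule tendsto_eq_intros | simp)+
  ultimately show ?thesis
    unfolding I_def[symmetric] by (intro tendsto_lowerbound) auto
qed

lemma integral_weight_tail_estimate:
  fixes W G :: "real \<Rightarrow> real"
  assumes cW: "continuous_on {0..1} W" and cG: "continuous_on {0..1} G"
    and a: "0 \<le> a" "a \<le> r" "r \<le> 1"
    and W0: "\<And>q. q \<in> {0..a} \<Longrightarrow> W q = 0"
    and Wb: "\<And>q. q \<in> {a..r} \<Longrightarrow> \<bar>W q\<bar> \<le> w"
    and Wc: "\<And>q. q \<in> {r..1} \<Longrightarrow> W q = w0"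
    and GM: "\<And>q. q \<in> {0..1} \<Longrightarrow> \<bar>G q\<bar> \<le> M"
  shows "\<bar>integral {0..1} (\<lambda>q. W q * G q) - w0 * integral {r..1} G\<bar> \<le> w * M * (r - a)"
proof -
  let ?f = "\<lambda>q. W q * G q"
  have cf: "continuous_on {0..1} ?f" using cW cG by (intro continuous_intros)
  have i1: "?f integrable_on {0..1}" using cf by (rule integrable_continuous_interval)
  have i2: "?f integrable_on {0..r}" by (rule integrable_subinterval_real[OF i1]) (use a in auto)
  have "integral {0..1} ?f = integral {0..a} ?f + integral {a..r} ?f + integral {r..1} ?f"
    using Henstock_Kurzweil_Integration.integral_combine[OF _ _ i1, of r]
      Henstock_Kurzweil_Integration.integral_combine[OF _ _ i2, of a] a by simp
  also have "integral {0..a} ?f = integral {0..a} (\<lambda>q. 0)"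
    by (rule integral_cong) (use W0 in auto)
  also have "integral {r..1} ?f = integral {r..1} (\<lambda>q. w0 * G q)"
    by (rule integral_cong) (use Wc in auto)
  finally have split: "integral {0..1} ?f - w0 * integral {r..1} G = integral {a..r} ?f"
    by simp
  have "norm (integral {a..r} ?f) \<le> (w * M) * (r - a)"
  proof (rule integral_bound)
    show "continuous_on {a..r} ?f" using cf by (rule continuous_on_subset) (use a in auto)
    fix x assume x: "x \<in> {a..r}"
    then have "\<bar>W x\<bar> \<le> w" "\<bar>G x\<bar> \<le> M" using Wb GM a by auto
    then show "norm (W x * G x) \<le> w * M" by (simp add: abs_mult mult_mono')
  qed fact
  then show ?thesis using split by simp
qed

lemma integral_nonneg_off_point:
  fixes f :: "real \<Rightarrow> real"
  assumes "f integrable_on {a..b}" "\<And>x. x \<in> {a..b} \<Longrightarrow> x \<noteq> c \<Longrightarrow> 0 \<le> f x"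
  shows "0 \<le> integral {a..b} f"
proof -
  let ?g = "\<lambda>x. if x = c then 0 else f x"
  have "integral {a..b} f = integral {a..b} ?g"
    by (rule integral_spike[of "{c}"]) auto
  moreover have "?g integrable_on {a..b}"
    by (rule integrable_spike[OF assms(1), of "{c}"]) auto
  ultimately show ?thesis using assms(2) by (auto intro!: integral_nonneg)
qed

lemma continuous_at_right_transform:
  fixes f g :: "real \<Rightarrow> real"
  assumes "continuous (at_right x) g" "f x = g x" "x < b"
    and "\<And>y. x < y \<Longrightarrow> y < b \<Longrightarrow> f y = g y"
  shows "continuous (at_right x) f"
proof -
  have "\<forall>\<^sub>F y in at_right x. g y = f y"
    using eventually_at_right_real[OF assms(3)] by eventually_elim (use assms(4) in auto)
  moreover have "(g \<longlongrightarrow> g x) (at_right x)" using assms(1) by (simp add: continuous_within)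
  ultimately have "(f \<longlongrightarrow> f x) (at_right x)" using Lim_transform_eventually assms(2) by fastforce
  then show ?thesis by (simp add: continuous_within)
qed

locale parisi_minimizer =
  fixes \<gamma> :: "nat \<Rightarrow> real" and h L0 :: real and \<alpha>0 :: "real \<Rightarrow> real"
  assumes summable_coeffs: "summable (\<lambda>p. 2 ^ p * (\<gamma> p)\<^sup>2)"
    and minimizer_in_classK: "(L0, \<alpha>0) \<in> classK"
    and minimal: "\<And>L \<alpha>. (L, \<alpha>) \<in> classK \<Longrightarrow> Qfun \<gamma> h L0 \<alpha>0 \<le> Qfun \<gamma> h L \<alpha>"
begin

abbreviation xi2 :: "real \<Rightarrow> real" where
  "xi2 \<equiv> deriv (deriv (xi \<gamma>))"

definition cum :: "real \<Rightarrow> real" where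
  "cum q = integral {0..q} \<alpha>0"

definition margin :: real where
  "margin = L0 - cum 1"

lemma L0_pos: "0 < L0"
  and alpha_in_classN: "\<alpha>0 \<in> classN"
  and alpha_integrable_01: "\<alpha>0 integrable_on {0..1}"
  and margin_pos: "0 < margin"
  using minimizer_in_classK by (simp_all add: classK_def margin_def cum_def)

lemma alpha_nonneg: "x \<in> {0..<1} \<Longrightarrow> 0 \<le> \<alpha>0 x"
  and alpha_mono: "mono_on {0..<1} \<alpha>0"
  and alpha_continuous_right: "x \<in> {0..<1} \<Longrightarrow> continuous (at_right x) \<alpha>0"
  using alpha_in_classN by (simp_all add: classN_def)

lemma alpha_integrable: "0 \<le> a \<Longrightarrow> b \<le> 1 \<Longrightarrow> \<alpha>0 integrable_on {a..b}"
  by (cases "a \<le> b") (auto intro: integrable_subinterval_real[OF alpha_integrable_01])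

lemma continuous_on_xi2: "continuous_on {0..1} xi2"
  by (rule continuous_on_subset[OF continuous_on_deriv2_xi[OF summable_coeffs]]) auto

lemma continuous_on_cum: "continuous_on {0..1} cum"
  unfolding cum_def by (rule indefinite_integral_continuous_1[OF alpha_integrable]) auto

lemma integral_alpha_nonneg: "0 \<le> a \<Longrightarrow> b \<le> 1 \<Longrightarrow> 0 \<le> integral {a..b} \<alpha>0"
  by (rule integral_nonneg_off_point[OF alpha_integrable, of _ _ 1]) (auto intro: alpha_nonneg)

lemma cum_add: "0 \<le> a \<Longrightarrow> a \<le> b \<Longrightarrow> b \<le> 1 \<Longrightarrow> cum b = cum a + integral {a..b} \<alpha>0"
  unfolding cum_def
  using Henstock_Kurzweil_Integration.integral_combine[OF _ _ alpha_integrable[of 0 b]] by simp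

lemma cum_nonneg: "0 \<le> a \<Longrightarrow> a \<le> 1 \<Longrightarrow> 0 \<le> cum a"
  unfolding cum_def using integral_alpha_nonneg by simp

lemma cum_mono: "0 \<le> a \<Longrightarrow> a \<le> b \<Longrightarrow> b \<le> 1 \<Longrightarrow> cum a \<le> cum b"
  using cum_add[of a b] integral_alpha_nonneg[of a b] by linarith

lemma margin_le: "q \<in> {0..1} \<Longrightarrow> margin \<le> L0 - cum q"
  unfolding margin_def using cum_mono[of q 1] by auto

lemma first_order_condition:
  fixes B :: "real \<Rightarrow> real" and l :: real
  assumes cB: "continuous_on {0..1} B"
    and competitors: "\<forall>\<^sub>F t in at_right 0. \<exists>\<alpha>. (L0 + t * l, \<alpha>) \<in> classK \<and>
                        (\<forall>q\<in>{0..1}. integral {0..q} \<alpha> = cum q + t * B q)"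
  shows "0 \<le> (deriv (xi \<gamma>) 1 + h\<^sup>2) * l - integral {0..1} (\<lambda>q. xi2 q * B q)
              - integral {0..1} (\<lambda>q. (l - B q) / (L0 - cum q)^2)"
proof -
  define y where "y q = L0 - cum q" for q
  define D where "D q = l - B q" for q
  have cy: "continuous_on {0..1} y"
    unfolding y_def using continuous_on_cum by (intro continuous_intros)
  have cD: "continuous_on {0..1} D"
    unfolding D_def using cB by (intro continuous_intros)
  have "0 \<le> ((deriv (xi \<gamma>) 1 + h\<^sup>2) * l - integral {0..1} (\<lambda>q. xi2 q * B q))
            - integral {0..1} (\<lambda>q. D q / (y q)^2)"
  proof (rule first_variation_inverse_nonneg[OF cy cD _ margin_pos])
    show "\<And>q. q \<in> {0..1} \<Longrightarrow> margin \<le> y q" using margin_le by (simp add: y_def)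
    show "\<forall>\<^sub>F t in at_right 0. 0 \<le> t * ((deriv (xi \<gamma>) 1 + h\<^sup>2) * l - integral {0..1} (\<lambda>q. xi2 q * B q))
            + integral {0..1} (\<lambda>q. 1/(y q + t * D q)) - integral {0..1} (\<lambda>q. 1/(y q))"
      using competitors
    proof eventually_elim
      case (elim t)
      then obtain \<alpha> where \<alpha>: "(L0 + t * l, \<alpha>) \<in> classK"
        and int\<alpha>: "\<And>q. q \<in> {0..1} \<Longrightarrow> integral {0..q} \<alpha> = cum q + t * B q" by blast
      have "integral {0..1} (\<lambda>q. xi2 q * integral {0..q} \<alpha>)
          = integral {0..1} (\<lambda>q. xi2 q * cum q + t * (xi2 q * B q))"
        by (rule integral_cong) (simp add: int\<alpha> algebra_simps)
      also have "\<dots> = integral {0..1} (\<lambda>q. xi2 q * cum q) + t * integral {0..1} (\<lambda>q. xi2 q * B q)"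
        using continuous_on_xi2 continuous_on_cum cB
        by (subst integral_add) (auto intro!: integrable_continuous_interval continuous_intros)
      finally have lin: "integral {0..1} (\<lambda>q. xi2 q * integral {0..q} \<alpha>)
          = integral {0..1} (\<lambda>q. xi2 q * cum q) + t * integral {0..1} (\<lambda>q. xi2 q * B q)" .
      have inv: "integral {0..1} (\<lambda>q. 1 / (L0 + t * l - integral {0..q} \<alpha>))
          = integral {0..1} (\<lambda>q. 1/(y q + t * D q))"
        by (rule integral_cong) (simp add: int\<alpha> y_def D_def algebra_simps)
      from minimal[OF \<alpha>] show ?case
        unfolding Qfun_def lin inv by (simp add: cum_def[symmetric] y_def algebra_simps)
    qed
  qed
  then show ?thesis by (simp add: y_def D_def)
qed

lemma integral_inverse_square: "integral {0..1} (\<lambda>q. 1 / (L0 - cum q)^2) = deriv (xi \<gamma>) 1 + h\<^sup>2"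
proof -
  have competitor: "\<forall>\<^sub>F t in at_right 0. \<exists>\<alpha>. (L0 + t * l, \<alpha>) \<in> classK \<and>
                      (\<forall>q\<in>{0..1}. integral {0..q} \<alpha> = cum q + t * 0)"
    if "l = 1 \<or> l = -1" for l :: real
  proof -
    have "\<forall>\<^sub>F t in at_right 0. t < margin"
      using eventually_at_right_real[OF margin_pos] by eventually_elim auto
    then show ?thesis
      using eventually_at_right_less
    proof eventually_elim
      case (elim t)
      then have "(L0 + t * l, \<alpha>0) \<in> classK"
        using minimizer_in_classK that cum_nonneg[of 1]
        by (auto simp: classK_def margin_def cum_def)
      then show ?case by (auto simp: cum_def)
    qed
  qed
  show ?thesis
    using first_order_condition[OF continuous_on_const competitor, of 1]
      first_order_condition[OF continuous_on_const competitor, of "-1"]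
    by simp
qed

abbreviation q0 :: real where
  "q0 \<equiv> q0_of \<alpha>0"

lemma q0_eq: "q0 = (if {s\<in>{0..<1}. \<alpha>0 s > 0} \<noteq> {} then Inf {s\<in>{0..<1}. \<alpha>0 s > 0} else 1)"
  by (simp add: q0_of_def)

lemma bdd_below_support: "bdd_below {s\<in>{0..<1}. \<alpha>0 s > 0}"
  by (rule bdd_belowI[of _ 0]) auto

lemma q0_nonneg: "0 \<le> q0"
  unfolding q0_eq by (auto intro!: cInf_greatest)

lemma q0_le_1: "q0 \<le> 1"
  unfolding q0_eq using cInf_lower[OF _ bdd_below_support] by (fastforce intro: order_trans)

lemma alpha_eq_0_below_q0: "0 \<le> x \<Longrightarrow> x < q0 \<Longrightarrow> \<alpha>0 x = 0"
  using alpha_nonneg[of x] cInf_lower[OF _ bdd_below_support, of x] q0_le_1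
  unfolding q0_eq by (fastforce split: if_splits)

lemma alpha_pos_above_q0:
  assumes "q0 < x" "x < 1"
  shows "0 < \<alpha>0 x"
proof -
  let ?S = "{s\<in>{0..<1}. \<alpha>0 s > 0}"
  have "?S \<noteq> {}" "Inf ?S < x" using assms q0_eq by (auto split: if_splits)
  then obtain s where s: "s \<in> ?S" "s < x"
    using cInf_less_iff[OF _ bdd_below_support] by auto
  then have "\<alpha>0 s \<le> \<alpha>0 x" using assms by (auto intro: mono_onD[OF alpha_mono])
  then show ?thesis using s by auto
qed

lemma cum_eq_0:
  assumes q: "0 \<le> q" "q \<le> q0"
  shows "cum q = 0"
proof -
  have "cum q = integral {0..q} (\<lambda>x. 0)"
    unfolding cum_def by (rule integral_spike[of "{q}"]) (use q alpha_eq_0_below_q0 in auto)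
  then show ?thesis by simp
qed

lemma cum_pos_above_q0:
  assumes r: "q0 < r" "r < 1"
  shows "0 < cum r"
proof -
  define p where "p = (q0 + r) / 2"
  have p: "0 \<le> p" "q0 < p" "p < r" using r q0_nonneg by (auto simp: p_def)
  have "integral {p..r} (\<lambda>x. \<alpha>0 p) \<le> integral {p..r} \<alpha>0"
    by (rule integral_le) (use p r alpha_integrable in \<open>auto intro: mono_onD[OF alpha_mono]\<close>)
  moreover have "0 < \<alpha>0 p * (r - p)" using alpha_pos_above_q0[of p] p r by simp
  ultimately show ?thesis
    using cum_add[of p r] cum_nonneg[of p] p r by (simp add: mult.commute)
qed

lemma cum_le_above_q0:
  assumes r: "q0 \<le> r" "r < 1"
  shows "cum r \<le> \<alpha>0 r * (r - q0)"
proof -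
  have "integral {q0..r} \<alpha>0 \<le> integral {q0..r} (\<lambda>x. \<alpha>0 r)"
    by (rule integral_le)
      (use r q0_nonneg alpha_integrable in \<open>auto intro: mono_onD[OF alpha_mono]\<close>)
  then show ?thesis
    using cum_add[of q0 r] cum_eq_0[of q0] q0_nonneg r by (simp add: mult.commute)
qed

definition grad :: "real \<Rightarrow> real" where
  "grad q = 1 / (L0 - cum q)^2 - xi2 q"

definition tail :: "real \<Rightarrow> real" where
  "tail x = integral {x..1} grad"

lemma L0_minus_cum_nonzero: "q \<in> {0..1} \<Longrightarrow> L0 - cum q \<noteq> 0"
  using margin_le[of q] margin_pos by auto

lemma continuous_on_inverse_square: "continuous_on {0..1} (\<lambda>q. 1 / (L0 - cum q)^2)"
  using continuous_on_cum L0_minus_cum_nonzero by (intro continuous_intros) auto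

lemma continuous_on_grad: "continuous_on {0..1} grad"
  unfolding grad_def[abs_def]
  by (intro continuous_on_diff continuous_on_inverse_square continuous_on_xi2)

lemma continuous_on_tail: "continuous_on {0..1} tail"
  unfolding tail_def[abs_def]
  by (rule indefinite_integral_continuous_1'[OF integrable_continuous_interval[OF continuous_on_grad]])

lemma tail_q0: "tail q0 = h\<^sup>2 + deriv (xi \<gamma>) q0 - q0 / L0^2"
proof -
  have q0: "0 \<le> q0" "q0 \<le> 1" by (fact q0_nonneg, fact q0_le_1)
  have iY: "(\<lambda>q. 1/(L0 - cum q)^2) integrable_on {0..1}"
    by (rule integrable_continuous_interval[OF continuous_on_inverse_square])
  have iX: "xi2 integrable_on {q0..1}"
    by (rule integrable_subinterval_real[OF integrable_continuous_interval[OF continuous_on_xi2]])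
      (use q0 in auto)
  have "integral {0..q0} (\<lambda>q. 1/(L0 - cum q)^2) = integral {0..q0} (\<lambda>q. 1/L0^2)"
    by (rule integral_cong) (use cum_eq_0 in auto)
  then have head: "integral {0..q0} (\<lambda>q. 1/(L0 - cum q)^2) = q0 / L0^2"
    using q0 by simp
  have "integral {q0..1} xi2 = deriv (xi \<gamma>) 1 - deriv (xi \<gamma>) q0"
  proof (rule integral_unique, rule fundamental_theorem_of_calculus)
    fix x assume "x \<in> {q0..1}"
    then have "\<bar>x\<bar> < 2" using q0 by auto
    then show "(deriv (xi \<gamma>) has_vector_derivative xi2 x) (at x within {q0..1})"
      using has_real_derivative_deriv_xi[OF summable_coeffs]
      by (simp add: has_real_derivative_iff_has_vector_derivative has_vector_derivative_at_within)
  qed (use q0 in simp)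
  moreover have "tail q0 = integral {q0..1} (\<lambda>q. 1/(L0 - cum q)^2) - integral {q0..1} xi2"
    unfolding tail_def grad_def
    by (rule integral_diff[OF integrable_subinterval_real[OF iY] iX]) (use q0 in auto)
  moreover have "integral {0..1} (\<lambda>q. 1/(L0 - cum q)^2)
      = integral {0..q0} (\<lambda>q. 1/(L0 - cum q)^2) + integral {q0..1} (\<lambda>q. 1/(L0 - cum q)^2)"
    using Henstock_Kurzweil_Integration.integral_combine[OF q0 iY] by simp
  ultimately show ?thesis
    using integral_inverse_square head by simp
qed

text \<open>\<open>perturb k s r t\<close> moves \<open>\<alpha>\<^sub>0\<close> on \<open>[0, r)\<close> towards the step \<open>k\<close> on \<open>[s, r)\<close>; it stays in \<open>N\<close>
  when \<open>\<alpha>\<^sub>0\<close> vanishes below \<open>s\<close> and \<open>k \<le> \<alpha>\<^sub>0(r)\<close>. Its primitive moves by \<open>t\<close> times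
  \<open>direction k s r\<close>.\<close>

definition direction :: "real \<Rightarrow> real \<Rightarrow> real \<Rightarrow> real \<Rightarrow> real" where
  "direction k s r q = k * max 0 (min q r - s) - cum (min q r)"

definition perturb :: "real \<Rightarrow> real \<Rightarrow> real \<Rightarrow> real \<Rightarrow> real \<Rightarrow> real" where
  "perturb k s r t x = \<alpha>0 x + t * ((if s \<le> x \<and> x < r then k else 0) - (if x < r then \<alpha>0 x else 0))"

lemma continuous_on_cum_min: "0 \<le> r \<Longrightarrow> continuous_on {0..1} (\<lambda>q. cum (min q r))"
  by (rule continuous_on_compose2[OF continuous_on_cum]) (auto intro!: continuous_intros)

lemma continuous_on_direction: "0 \<le> r \<Longrightarrow> continuous_on {0..1} (direction k s r)"
  unfolding direction_def[abs_def] by (intro continuous_intros continuous_on_cum_min)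

lemma has_integral_perturb:
  assumes sr: "0 \<le> s" "s \<le> r" and q: "q \<in> {0..1}"
  shows "(perturb k s r t has_integral cum q + t * direction k s r q) {0..q}"
proof -
  have ind1: "((\<lambda>x. if x \<in> {s..r} then k else 0) has_integral k * max 0 (min q r - s)) {0..q}"
  proof -
    have eq: "{s..r} \<inter> {0..q} = {s..min q r}" using sr q by auto
    have "(\<lambda>x. if x \<in> {s..r} then k else 0) integrable_on {0..q}"
      by (subst integrable_restrict_Int, subst eq) (rule integrable_const_ivl)
    moreover have "integral {0..q} (\<lambda>x. if x \<in> {s..r} then k else 0) = k * max 0 (min q r - s)"
      using sr by (subst integral_restrict_Int, subst eq) (auto simp: max_def min_def)
    ultimately show ?thesis by (metis integrable_integral)
  qed
  have ind2: "((\<lambda>x. if x \<in> {..r} then \<alpha>0 x else 0) has_integral cum (min q r)) {0..q}"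
  proof -
    have eq: "{..r} \<inter> {0..q} = {0..min q r}" using sr q by auto
    have "(\<lambda>x. if x \<in> {..r} then \<alpha>0 x else 0) integrable_on {0..q}"
      using alpha_integrable[of 0 "min q r"] q by (subst integrable_restrict_Int, subst eq) auto
    moreover have "integral {0..q} (\<lambda>x. if x \<in> {..r} then \<alpha>0 x else 0) = cum (min q r)"
      by (subst integral_restrict_Int, subst eq) (simp add: cum_def)
    ultimately show ?thesis by (metis integrable_integral)
  qed
  have "(\<alpha>0 has_integral cum q) {0..q}"
    unfolding cum_def by (rule integrable_integral, rule alpha_integrable) (use q in auto)
  from has_integral_add[OF this has_integral_mult_right[OF has_integral_diff[OF ind1 ind2], of t]]
  have "((\<lambda>x. \<alpha>0 x + t * ((if x \<in> {s..r} then k else 0) - (if x \<in> {..r} then \<alpha>0 x else 0)))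
          has_integral cum q + t * direction k s r q) {0..q}"
    by (simp add: direction_def)
  then show ?thesis
    by (rule has_integral_spike[of "{r}", rotated 2]) (auto simp: perturb_def)
qed

lemma perturb_eq:
  assumes "s \<le> r" "\<And>x. 0 \<le> x \<Longrightarrow> x < s \<Longrightarrow> \<alpha>0 x = 0" "0 \<le> x"
  shows "perturb k s r t x = (if x < s then 0 else if x < r then (1 - t) * \<alpha>0 x + t * k else \<alpha>0 x)"
  using assms by (auto simp: perturb_def algebra_simps)

lemma mono_on_perturb:
  assumes sr: "0 \<le> s" "s \<le> r" "r < 1" and k: "0 \<le> k" "k \<le> \<alpha>0 r"
    and zero: "\<And>x. 0 \<le> x \<Longrightarrow> x < s \<Longrightarrow> \<alpha>0 x = 0" and t: "0 \<le> t" "t \<le> 1"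
  shows "mono_on {0..<1} (perturb k s r t)"
proof (rule mono_onI)
  fix x y :: real assume x: "x \<in> {0..<1}" and y: "y \<in> {0..<1}" and xy: "x \<le> y"
  have r: "r \<in> {0..<1}" using sr by auto
  have mono: "\<alpha>0 a \<le> \<alpha>0 b" if "a \<in> {0..<1}" "b \<in> {0..<1}" "a \<le> b" for a b
    using mono_onD[OF alpha_mono that] .
  consider "x < s" | "s \<le> x" "y < r" | "s \<le> x" "x < r" "r \<le> y" | "r \<le> x"
    by linarith
  then show "perturb k s r t x \<le> perturb k s r t y"
  proof cases
    case 1
    have "0 \<le> (1 - t) * \<alpha>0 y + t * k" using alpha_nonneg[OF y] t k by simp
    then show ?thesis using 1 alpha_nonneg[OF y] xy x y sr
      by (auto simp: perturb_eq[OF _ zero])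
  next
    case 2
    have "(1 - t) * \<alpha>0 x + t * k \<le> (1 - t) * \<alpha>0 y + t * k"
      using mono[OF x y xy] t by (intro add_right_mono mult_left_mono) auto
    then show ?thesis using 2 xy x y sr by (auto simp: perturb_eq[OF _ zero])
  next
    case 3
    have "(1 - t) * \<alpha>0 x + t * k \<le> (1 - t) * \<alpha>0 r + t * \<alpha>0 r"
      using mono[OF x r] 3 t k by (intro add_mono mult_left_mono) auto
    then show ?thesis using 3 mono[OF r y] x y sr by (auto simp: perturb_eq[OF _ zero] algebra_simps)
  next
    case 4
    then show ?thesis using mono[OF x y xy] xy x y sr by (auto simp: perturb_eq[OF _ zero])
  qed
qed

lemma perturb_in_classN:
  assumes sr: "0 \<le> s" "s \<le> r" "r < 1" and k: "0 \<le> k" "k \<le> \<alpha>0 r"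
    and zero: "\<And>x. 0 \<le> x \<Longrightarrow> x < s \<Longrightarrow> \<alpha>0 x = 0" and t: "0 \<le> t" "t \<le> 1"
  shows "perturb k s r t \<in> classN"
proof -
  have "0 \<le> perturb k s r t x" if x: "x \<in> {0..<1}" for x
    using alpha_nonneg[OF x] x t k sr by (auto simp: perturb_eq[OF _ zero])
  moreover have "continuous (at_right x) (perturb k s r t)" if x: "x \<in> {0..<1}" for x
  proof -
    consider "x < s" | "s \<le> x" "x < r" | "r \<le> x" by linarith
    then show ?thesis
    proof cases
      case 1
      show ?thesis
        by (rule continuous_at_right_transform[of x "\<lambda>_. 0" _ s])
          (use 1 x sr in \<open>auto simp: perturb_eq[OF _ zero]\<close>)
    next
      case 2
      have "continuous (at_right x) (\<lambda>y. (1 - t) * \<alpha>0 y + t * k)"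
        using alpha_continuous_right[OF x] by (intro continuous_intros)
      then show ?thesis
        by (rule continuous_at_right_transform[of x _ _ r])
          (use 2 x sr in \<open>auto simp: perturb_eq[OF _ zero]\<close>)
    next
      case 3
      show ?thesis
        by (rule continuous_at_right_transform[OF alpha_continuous_right[OF x], of _ "x + 1"])
          (use 3 x sr in \<open>auto simp: perturb_eq[OF _ zero]\<close>)
    qed
  qed
  ultimately show ?thesis
    using mono_on_perturb[OF assms] by (simp add: classN_def)
qed

lemma direction_variation_nonneg:
  assumes sr: "0 \<le> s" "s \<le> r" "r < 1" and k: "0 \<le> k" "k \<le> \<alpha>0 r"
    and zero: "\<And>x. 0 \<le> x \<Longrightarrow> x < s \<Longrightarrow> \<alpha>0 x = 0"
  shows "0 \<le> integral {0..1} (\<lambda>q. direction k s r q * grad q)"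
proof -
  let ?B = "direction k s r"
  have cB: "continuous_on {0..1} ?B" using continuous_on_direction sr by simp
  have "\<forall>\<^sub>F t in at_right 0. t * ?B 1 < margin"
  proof (rule order_tendstoD(2))
    show "((\<lambda>t. t * ?B 1) \<longlongrightarrow> 0) (at_right 0)"
      by (rule tendsto_eq_intros | simp)+
  qed (fact margin_pos)
  moreover have "\<forall>\<^sub>F t in at_right 0. t < (1::real)"
    using eventually_at_right_real[OF zero_less_one] by eventually_elim auto
  ultimately have "\<forall>\<^sub>F t in at_right 0. \<exists>\<alpha>. (L0 + t * 0, \<alpha>) \<in> classK \<and>
                     (\<forall>q\<in>{0..1}. integral {0..q} \<alpha> = cum q + t * ?B q)"
    using eventually_at_right_less
  proof eventually_elim
    case (elim t)
    have int: "(perturb k s r t has_integral cum q + t * ?B q) {0..q}" if "q \<in> {0..1}" for q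
      using has_integral_perturb[OF sr(1,2) that] .
    have "(L0, perturb k s r t) \<in> classK"
      using int[of 1] perturb_in_classN[OF assms, of t] elim L0_pos
      by (auto simp: classK_def margin_def integral_unique intro: has_integral_integrable)
    then show ?case using int by (auto intro!: exI[of _ "perturb k s r t"] integral_unique)
  qed
  from first_order_condition[OF cB this]
  have "0 \<le> integral {0..1} (\<lambda>q. ?B q / (L0 - cum q)^2) - integral {0..1} (\<lambda>q. xi2 q * ?B q)"
    by simp
  also have "\<dots> = integral {0..1} (\<lambda>q. ?B q * grad q)"
    using cB continuous_on_cum continuous_on_xi2 L0_minus_cum_nonzero
    by (subst integral_diff[symmetric])
      (auto intro!: integrable_continuous_interval continuous_intros integral_cong
        simp: grad_def algebra_simps)
  finally show ?thesis .
qed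

lemma integral_direction_grad:
  assumes "0 \<le> r"
  shows "integral {0..1} (\<lambda>q. direction k s r q * grad q)
           = k * integral {0..1} (\<lambda>q. max 0 (min q r - s) * grad q)
             - integral {0..1} (\<lambda>q. cum (min q r) * grad q)"
  using continuous_on_cum_min[OF assms] continuous_on_grad
  by (subst integral_mult_right[symmetric], subst integral_diff[symmetric])
    (auto intro!: integrable_continuous_interval continuous_intros integral_cong
      simp: direction_def algebra_simps)

lemma integral_cum_grad_estimate:
  assumes M: "\<And>q. q \<in> {0..1} \<Longrightarrow> \<bar>grad q\<bar> \<le> M" and r: "q0 \<le> r" "r \<le> 1"
  shows "\<bar>integral {0..1} (\<lambda>q. cum (min q r) * grad q) - cum r * tail r\<bar> \<le> cum r * M * (r - q0)"
  unfolding tail_def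
proof (rule integral_weight_tail_estimate[OF _ continuous_on_grad q0_nonneg r _ _ _ M])
  show "continuous_on {0..1} (\<lambda>q. cum (min q r))"
    using continuous_on_cum_min r q0_nonneg by simp
  show "\<And>q. q \<in> {0..q0} \<Longrightarrow> cum (min q r) = 0" using cum_eq_0 r by auto
  show "\<And>q. q \<in> {q0..r} \<Longrightarrow> \<bar>cum (min q r)\<bar> \<le> cum r"
    using cum_nonneg cum_mono r q0_nonneg by auto
qed auto

lemma integral_ramp_grad_estimate:
  assumes M: "\<And>q. q \<in> {0..1} \<Longrightarrow> \<bar>grad q\<bar> \<le> M" and sr: "0 \<le> s" "s \<le> r" "r \<le> 1"
  shows "integral {0..1} (\<lambda>q. max 0 (min q r - s) * grad q) \<le> (r - s) * tail r + M * (r - s)^2"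
proof -
  have "\<bar>integral {0..1} (\<lambda>q. max 0 (min q r - s) * grad q) - (r - s) * integral {r..1} grad\<bar>
      \<le> (r - s) * M * (r - s)"
    by (rule integral_weight_tail_estimate[OF _ continuous_on_grad sr _ _ _ M])
      (use sr in \<open>auto intro!: continuous_intros\<close>)
  then show ?thesis unfolding tail_def by (simp add: power2_eq_square algebra_simps)
qed

lemma tail_le_above_q0:
  assumes M: "\<And>q. q \<in> {0..1} \<Longrightarrow> \<bar>grad q\<bar> \<le> M" and r: "q0 < r" "r < 1"
  shows "tail r \<le> M * (r - q0)"
proof -
  have "0 \<le> integral {0..1} (\<lambda>q. direction 0 0 r q * grad q)"
    by (rule direction_variation_nonneg) (use r q0_nonneg alpha_nonneg in auto)
  then have "integral {0..1} (\<lambda>q. cum (min q r) * grad q) \<le> 0"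
    using integral_direction_grad[of r 0 0] r q0_nonneg by simp
  then have "cum r * (tail r - M * (r - q0)) \<le> 0"
    using integral_cum_grad_estimate[OF M, of r] r by (simp add: algebra_simps)
  then show ?thesis
    using cum_pos_above_q0[OF r] by (simp add: mult_le_0_iff)
qed

lemma tail_ge_above_q0:
  assumes M: "\<And>q. q \<in> {0..1} \<Longrightarrow> \<bar>grad q\<bar> \<le> M"
    and r: "q0 < r" "r < 1" "r - q0 \<le> q0 / 3"
  shows "- 6 * M * (r - q0) \<le> tail r"
proof (rule ccontr)
  have Me: "0 \<le> M * (r - q0)" using M[of 0] r by simp
  assume "\<not> ?thesis"
  then have neg: "tail r < 0" "tail r < - 6 * M * (r - q0)" using Me by auto
  define e where "e = r - q0"
  define s where "s = q0 - 3 * e"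
  define k where "k = \<alpha>0 r"
  have e: "0 < e" and s: "0 \<le> s" "s \<le> r" "r - s = 4 * e" using r by (auto simp: e_def s_def)
  have k: "0 < k" using alpha_pos_above_q0[OF r(1,2)] by (simp add: k_def)
  have cum_r: "0 \<le> cum r" "cum r \<le> k * e"
    using cum_nonneg[of r] cum_le_above_q0[of r] r q0_nonneg by (auto simp: k_def e_def)
  have "0 \<le> integral {0..1} (\<lambda>q. direction k s r q * grad q)"
    by (rule direction_variation_nonneg)
      (use s r k alpha_eq_0_below_q0 in \<open>auto simp: k_def s_def e_def\<close>)
  also have "\<dots> = k * integral {0..1} (\<lambda>q. max 0 (min q r - s) * grad q)
                  - integral {0..1} (\<lambda>q. cum (min q r) * grad q)"
    using integral_direction_grad r q0_nonneg by simp
  also have "\<dots> \<le> k * (4 * e * tail r + 16 * M * e^2) - cum r * tail r + cum r * M * e"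
  proof -
    have "integral {0..1} (\<lambda>q. max 0 (min q r - s) * grad q) \<le> 4 * e * tail r + 16 * M * e^2"
      using integral_ramp_grad_estimate[of M s r] M s r by (simp add: power2_eq_square)
    then have "k * integral {0..1} (\<lambda>q. max 0 (min q r - s) * grad q)
        \<le> k * (4 * e * tail r + 16 * M * e^2)"
      using k by (intro mult_left_mono) auto
    moreover have "cum r * tail r - cum r * M * e \<le> integral {0..1} (\<lambda>q. cum (min q r) * grad q)"
      using integral_cum_grad_estimate[of M r] M r by (simp add: e_def abs_le_iff)
    ultimately show ?thesis by linarith
  qed
  also have "\<dots> \<le> k * (4 * e * tail r + 16 * M * e^2) - k * e * tail r + k * e * M * e"
  proof -
    have "k * e * tail r \<le> cum r * tail r"
      using cum_r neg by (intro mult_right_mono_neg) auto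
    moreover have "cum r * (M * e) \<le> k * e * (M * e)"
      using cum_r Me by (intro mult_right_mono) (auto simp: e_def)
    ultimately show ?thesis by (simp add: algebra_simps)
  qed
  also have "\<dots> = k * e * (3 * tail r + 17 * M * e)"
    by (simp add: power2_eq_square algebra_simps)
  finally have "0 \<le> 3 * tail r + 17 * M * e"
    using mult_pos_pos[OF k e] by (simp add: zero_le_mult_iff)
  then show False using neg Me by (simp add: e_def)
qed

lemma tail_q0_eq_0: "tail q0 = 0"
proof (cases "q0 < 1")
  case False
  then show ?thesis using q0_le_1 by (simp add: tail_def)
next
  case q0: True
  obtain M where M: "\<And>q. q \<in> {0..1} \<Longrightarrow> \<bar>grad q\<bar> \<le> M"
    using continuous_on_compact_bound[OF compact_Icc continuous_on_grad] by auto
  have lim: "(tail \<longlongrightarrow> tail q0) (at_right q0)"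
    by (rule continuous_on_Icc_at_rightD[OF continuous_on_subset[OF continuous_on_tail] q0])
      (use q0_nonneg in auto)
  have lin: "((\<lambda>r. c * (r - q0)) \<longlongrightarrow> 0) (at_right q0)" for c :: real
    by (rule tendsto_eq_intros | simp)+
  have "tail q0 \<le> 0"
  proof (rule tendsto_le[OF _ lin lim])
    show "\<forall>\<^sub>F r in at_right q0. tail r \<le> M * (r - q0)"
      using eventually_at_right_real[OF q0] by eventually_elim (auto intro: tail_le_above_q0[OF M])
  qed simp
  moreover have "0 \<le> tail q0"
  proof (cases "q0 = 0")
    case True
    then show ?thesis using tail_q0 deriv_xi_0[OF summable_coeffs] by simp
  next
    case False
    then have "q0 < min 1 (4 * q0 / 3)" using q0 q0_nonneg by auto
    from eventually_at_right_real[OF this]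
    have "\<forall>\<^sub>F r in at_right q0. - 6 * M * (r - q0) \<le> tail r"
      by eventually_elim (rule tail_ge_above_q0[OF M], auto)
    from tendsto_le[OF _ lim lin this] show ?thesis by simp
  qed
  ultimately show ?thesis by simp
qed

end

theorem lemma10:
  fixes \<gamma> :: "nat \<Rightarrow> real" and h L0 :: real and \<alpha>0 :: "real \<Rightarrow> real"
  assumes summ: "summable (\<lambda>p. 2 ^ p * (\<gamma> p)\<^sup>2)"
    and odd0: "\<And>p. odd p \<Longrightarrow> \<gamma> p = 0"
    and inK: "(L0, \<alpha>0) \<in> classK"
    and minim: "\<And>L \<alpha>. (L, \<alpha>) \<in> classK \<Longrightarrow> Qfun \<gamma> h L0 \<alpha>0 \<le> Qfun \<gamma> h L \<alpha>"
    and uniq: "\<And>L \<alpha>. (L, \<alpha>) \<in> classK \<Longrightarrow> (\<forall>(L', \<alpha>')\<in>classK. Qfun \<gamma> h L \<alpha> \<le> Qfun \<gamma> h L' \<alpha>')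
                 \<Longrightarrow> L = L0 \<and> (\<forall>s\<in>{0..<1}. \<alpha> s = \<alpha>0 s)"
  shows "L0\<^sup>2 * (deriv (xi \<gamma>) (q0_of \<alpha>0) + h\<^sup>2) = q0_of \<alpha>0"
proof -
  interpret parisi_minimizer \<gamma> h L0 \<alpha>0
    using summ inK minim by unfold_locales
  have "h\<^sup>2 + deriv (xi \<gamma>) q0 - q0 / L0^2 = 0"
    using tail_q0 tail_q0_eq_0 by simp
  then show ?thesis
    using L0_pos by (simp add: field_simps)
qed

end
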